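(* For all $n\ge1$ and all integers $h$ with $0\le h\le \frac12n^2-\frac52n$, $|\mathcal C^h_n| \ge n^{n-2}\left(\frac{n^2-3n}{2(n+h)}\right)^h$.
   Context: Graphs are finite and simple. For an integer $h\ge0$, $\mathcal C^h_n$ is the set of connected graphs on vertex set $[n]$ with at most $h+n-1$ edges. *)

theory Defs
  imports Complex_Main
begin

definition simple_graph :: "'a set \<Rightarrow> 'a set set \<Rightarrow> bool" where
  "simple_graph V E \<longleftrightarrow> (\<forall>e\<in>E. e \<subseteq> V \<and> card e = 2)"

definition walk :: "'a set set \<Rightarrow> 'a list \<Rightarrow> bool" where
  "walk E xs \<longleftrightarrow> xs \<noteq> [] \<and> (\<forall>i. Suc i < length xs \<longrightarrow> {xs ! i, xs ! Suc i} \<in> E)"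

definition connected_graph :: "'a set \<Rightarrow> 'a set set \<Rightarrow> bool" where
  "connected_graph V E \<longleftrightarrow> V \<noteq> {} \<and>
     (\<forall>u\<in>V. \<forall>v\<in>V. \<exists>xs. walk E xs \<and> hd xs = u \<and> last xs = v)"

definition C :: "nat \<Rightarrow> nat \<Rightarrow> nat set set set" where
  "C h n = {E. simple_graph {1..n} E \<and> connected_graph {1..n} E \<and> card E \<le> h + n - 1}"

end

theory Submission
  imports Defs "HOL-Library.FuncSet"
begin

text \<open>Pair each of the n^(n-2) spanning trees of the complete graph on [n] with each h-set
  of non-tree edges; there are binom(M, h) of these, M = binom(n, 2) - (n - 1).  The union is a
  connected graph with N = n - 1 + h edges, and the pair is recovered from the graph together with
  the added h-set, since the tree is what remains.  So every graph arises at most binom(N, h)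
  times and |C h n| \<ge> n^(n-2) binom(M, h) / binom(N, h).  The ratio is at least q^h because
  (M - i) / (N - i) \<ge> q factor by factor once q \<ge> 1 and q N \<le> M.

  Trees are encoded by parent maps towards the root 1.  Cayley's formula is proved in the form
  k (m + k)^(m-1) for forests on m vertices hanging from k roots, by induction on the set of
  vertices whose parent is a root.\<close>

section \<open>Rooted forests as parent maps\<close>

inductive reaches :: "('a \<Rightarrow> 'a) \<Rightarrow> 'a set \<Rightarrow> 'a \<Rightarrow> bool" for f R where
  reaches_root: "a \<in> R \<Longrightarrow> reaches f R a"
| reaches_step: "reaches f R (f a) \<Longrightarrow> reaches f R a"

text \<open>A forest on \<open>A \<union> R\<close> in which every tree contains exactly one root from \<open>R\<close>,
  encoded by the map sending each vertex of \<open>A\<close> to its parent.\<close>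

definition rooted_forests :: "'a set \<Rightarrow> 'a set \<Rightarrow> ('a \<Rightarrow> 'a) set" where
  "rooted_forests A R = {f \<in> A \<rightarrow>\<^sub>E (A \<union> R). \<forall>a\<in>A. reaches f R a}"

lemma reaches_not_fixed: "reaches f R x \<Longrightarrow> x \<notin> R \<Longrightarrow> f x \<noteq> x"
  by (induction rule: reaches.induct) auto

lemma reaches_no_2cycle: "reaches f R x \<Longrightarrow> x \<notin> R \<Longrightarrow> f x \<notin> R \<Longrightarrow> f (f x) \<noteq> x"
  by (induction rule: reaches.induct) auto

lemma rooted_forests_PiE: "p \<in> rooted_forests A R \<Longrightarrow> p \<in> A \<rightarrow>\<^sub>E (A \<union> R)"
  unfolding rooted_forests_def by simp

lemma rooted_forests_reaches: "p \<in> rooted_forests A R \<Longrightarrow> a \<in> A \<Longrightarrow> reaches p R a"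
  unfolding rooted_forests_def by simp

lemma finite_rooted_forests: "finite A \<Longrightarrow> finite R \<Longrightarrow> finite (rooted_forests A R)"
  unfolding rooted_forests_def by (rule finite_subset[of _ "A \<rightarrow>\<^sub>E (A \<union> R)"]) (auto intro: finite_PiE)

lemma restrict_rooted_forest:
  assumes f: "f \<in> rooted_forests A R" and dis: "A \<inter> R = {}" and S: "S = {a\<in>A. f a \<in> R}"
  shows "restrict f (A - S) \<in> rooted_forests (A - S) S"
proof -
  have parent: "f a \<in> A" if "a \<in> A - S" for a
    using PiE_mem[OF rooted_forests_PiE[OF f], of a] that S by auto
  have "reaches (restrict f (A - S)) S x" if "reaches f R x" "x \<in> A - S" for x
    using that
  proof (induction rule: reaches.induct)
    case (reaches_step a)
    have "f a \<in> A" using parent reaches_step.prems .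
    then have "reaches (restrict f (A - S)) S (f a)"
      using reaches_step.IH by (cases "f a \<in> S") (blast intro: reaches_root)+
    moreover have "restrict f (A - S) a = f a" using reaches_step.prems by simp
    ultimately show ?case by (metis reaches.reaches_step)
  qed (use dis in auto)
  then show ?thesis
    using parent rooted_forests_reaches[OF f] unfolding rooted_forests_def by auto
qed

lemma graft_rooted_forest:
  assumes g: "g \<in> S \<rightarrow>\<^sub>E R" and h: "h \<in> rooted_forests (A - S) S"
    and SA: "S \<subseteq> A" and dis: "A \<inter> R = {}"
  defines "m \<equiv> \<lambda>x. if x \<in> S then g x else h x"
  shows "m \<in> rooted_forests A R" and "{a\<in>A. m a \<in> R} = S"
proof -
  have parent: "h a \<in> A" if "a \<in> A - S" for a
    using PiE_mem[OF rooted_forests_PiE[OF h] that] SA by auto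
  have root_child: "m a \<in> R" if "a \<in> S" for a
    using g that unfolding m_def by auto
  have "reaches m R x" if "reaches h S x" "x \<in> A" for x
    using that
  proof (induction rule: reaches.induct)
    case (reaches_step a)
    show ?case
    proof (cases "a \<in> S")
      case False
      then have "m a = h a" unfolding m_def by simp
      moreover have "reaches m R (h a)"
        using reaches_step.IH parent False reaches_step.prems by blast
      ultimately show ?thesis by (metis reaches.reaches_step)
    qed (use root_child in \<open>blast intro: reaches.intros\<close>)
  qed (use root_child in \<open>blast intro: reaches.intros\<close>)
  moreover have "reaches h S a" if "a \<in> A" for a
    using that rooted_forests_reaches[OF h] reaches_root[of a S h] by blast
  moreover have "m \<in> A \<rightarrow>\<^sub>E (A \<union> R)"
  proof -
    have "h \<in> extensional (A - S)" using rooted_forests_PiE[OF h] by (simp add: PiE_iff)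
    then have "m \<in> extensional A" using g SA unfolding m_def by (auto simp: extensional_def)
    moreover have "m a \<in> A \<union> R" if "a \<in> A" for a
      using root_child parent that unfolding m_def by (cases "a \<in> S") auto
    ultimately show ?thesis by (simp add: PiE_iff)
  qed
  ultimately show "m \<in> rooted_forests A R" unfolding rooted_forests_def by blast
  have "m a \<notin> R" if "a \<in> A - S" for a
    using parent[OF that] that dis unfolding m_def by auto
  then show "{a\<in>A. m a \<in> R} = S"
    using root_child SA by blast
qed

lemma bij_betw_rooted_forests_split:
  assumes dis: "A \<inter> R = {}" and SA: "S \<subseteq> A"
  shows "bij_betw (\<lambda>f. (restrict f S, restrict f (A - S)))
           {f \<in> rooted_forests A R. {a\<in>A. f a \<in> R} = S}
           ((S \<rightarrow>\<^sub>E R) \<times> rooted_forests (A - S) S)"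
proof (rule bij_betw_byWitness[where f'="\<lambda>(g, h) x. if x \<in> S then g x else h x"])
  have "(\<lambda>x. if x \<in> S then restrict f S x else restrict f (A - S) x) = f"
    if "f \<in> rooted_forests A R" for f
    using rooted_forests_PiE[OF that] SA by (auto simp: fun_eq_iff PiE_def extensional_def)
  then show "\<forall>f\<in>{f \<in> rooted_forests A R. {a\<in>A. f a \<in> R} = S}.
      (\<lambda>(g, h) x. if x \<in> S then g x else h x) (restrict f S, restrict f (A - S)) = f"
    by simp
  show "\<forall>gh\<in>(S \<rightarrow>\<^sub>E R) \<times> rooted_forests (A - S) S.
      (\<lambda>f. (restrict f S, restrict f (A - S))) ((\<lambda>(g, h) x. if x \<in> S then g x else h x) gh) = gh"
    by (auto simp: rooted_forests_def fun_eq_iff PiE_def extensional_def)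
  show "(\<lambda>f. (restrict f S, restrict f (A - S))) ` {f \<in> rooted_forests A R. {a\<in>A. f a \<in> R} = S}
      \<subseteq> (S \<rightarrow>\<^sub>E R) \<times> rooted_forests (A - S) S"
  proof (rule image_subsetI)
    fix f assume "f \<in> {f \<in> rooted_forests A R. {a\<in>A. f a \<in> R} = S}"
    then show "(restrict f S, restrict f (A - S)) \<in> (S \<rightarrow>\<^sub>E R) \<times> rooted_forests (A - S) S"
      using restrict_rooted_forest[OF _ dis] by auto
  qed
  show "(\<lambda>(g, h) x. if x \<in> S then g x else h x) ` ((S \<rightarrow>\<^sub>E R) \<times> rooted_forests (A - S) S)
      \<subseteq> {f \<in> rooted_forests A R. {a\<in>A. f a \<in> R} = S}"
  proof (rule image_subsetI)
    fix gh assume "gh \<in> (S \<rightarrow>\<^sub>E R) \<times> rooted_forests (A - S) S"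
    then obtain g h where "gh = (g, h)" "g \<in> S \<rightarrow>\<^sub>E R" "h \<in> rooted_forests (A - S) S"
      by blast
    then show "(\<lambda>(g, h) x. if x \<in> S then g x else h x) gh
        \<in> {f \<in> rooted_forests A R. {a\<in>A. f a \<in> R} = S}"
      using graft_rooted_forest[OF _ _ SA dis] by simp
  qed
qed

section \<open>Cayley's formula for rooted forests\<close>

lemma sum_nonempty_subsets_by_card:
  assumes "finite A"
  shows "(\<Sum>S | S \<subseteq> A \<and> S \<noteq> {}. g (card S)) = (\<Sum>j=1..card A. (card A choose j) * g j)"
proof -
  have "card ` {S. S \<subseteq> A \<and> S \<noteq> {}} \<subseteq> {1..card A}"
    using assms by (auto simp: card_mono Suc_le_eq card_gt_0_iff finite_subset)
  then have "(\<Sum>S | S \<subseteq> A \<and> S \<noteq> {}. g (card S))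
      = (\<Sum>j=1..card A. \<Sum>S \<in> {S. S \<subseteq> A \<and> S \<noteq> {}} \<inter> {S. card S = j}. g (card S))"
    using assms by (subst sum.group[symmetric]) (auto simp: Int_def)
  also have "\<dots> = (\<Sum>j=1..card A. (card A choose j) * g j)"
  proof (rule sum.cong[OF refl])
    fix j assume "j \<in> {1..card A}"
    then have "{S. S \<subseteq> A \<and> S \<noteq> {}} \<inter> {S. card S = j} = {S. S \<subseteq> A \<and> card S = j}" by auto
    then show "(\<Sum>S \<in> {S. S \<subseteq> A \<and> S \<noteq> {}} \<inter> {S. card S = j}. g (card S)) = (card A choose j) * g j"
      using n_subsets[OF assms, of j] by simp
  qed
  finally show ?thesis .
qed

lemma sum_forest_count_identity:
  fixes k m :: nat
  assumes "0 < m"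
  shows "(\<Sum>j=1..m. (m choose j) * (k ^ j * (if j = m then 1 else j * m ^ (m - j - 1))))
    = k * (m + k) ^ (m - 1)"
proof -
  obtain m' where m: "m = Suc m'" using assms by (cases m) auto
  have summand: "(m choose Suc i) * (k ^ Suc i * (if Suc i = m then 1 else Suc i * m ^ (m - Suc i - 1)))
      = k * ((m' choose i) * k ^ i * m ^ (m' - i))" if "i \<le> m'" for i
  proof (cases "i = m'")
    case False
    then have "m ^ (m' - i) = m * m ^ (m - Suc i - 1)"
      using that m by (simp flip: power_Suc)
    moreover have "(m choose Suc i) * Suc i = m * (m' choose i)"
      unfolding m by (rule Suc_times_binomial_eq[symmetric])
    ultimately have "(m choose Suc i) * (Suc i * m ^ (m - Suc i - 1)) = (m' choose i) * m ^ (m' - i)"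
      by (metis mult.assoc mult.commute)
    then have "k ^ Suc i * ((m choose Suc i) * (Suc i * m ^ (m - Suc i - 1)))
        = k * k ^ i * ((m' choose i) * m ^ (m' - i))"
      by simp
    then show ?thesis using False m by (simp add: mult_ac)
  qed (simp add: m)
  have "(\<Sum>j=1..m. (m choose j) * (k ^ j * (if j = m then 1 else j * m ^ (m - j - 1))))
      = (\<Sum>i=0..m'. (m choose Suc i) * (k ^ Suc i * (if Suc i = m then 1 else Suc i * m ^ (m - Suc i - 1))))"
    unfolding m by (simp only: One_nat_def sum.shift_bounds_cl_Suc_ivl)
  also have "\<dots> = (\<Sum>i=0..m'. k * ((m' choose i) * k ^ i * m ^ (m' - i)))"
    by (intro sum.cong refl summand) simp
  also have "\<dots> = k * (\<Sum>i\<le>m'. (m' choose i) * k ^ i * m ^ (m' - i))"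
    by (simp add: sum_distrib_left atLeast0AtMost)
  also have "\<dots> = k * (k + m) ^ m'"
    by (simp add: binomial_ring)
  finally show ?thesis by (simp add: m add.commute)
qed

lemma card_rooted_forests_with_root_children:
  assumes "finite A" and "A \<inter> R = {}" and "S \<subseteq> A"
  shows "card {f \<in> rooted_forests A R. {a\<in>A. f a \<in> R} = S}
    = card R ^ card S * card (rooted_forests (A - S) S)"
proof -
  have "finite S" using assms(1,3) by (rule finite_subset[rotated])
  then show ?thesis
    using bij_betw_same_card[OF bij_betw_rooted_forests_split[OF assms(2,3)]]
    by (simp add: card_cartesian_product card_PiE)
qed

lemma rooted_forests_eq_UN_root_children:
  assumes dis: "A \<inter> R = {}" and "A \<noteq> {}"
  shows "rooted_forests A R
    = (\<Union>S \<in> {S. S \<subseteq> A \<and> S \<noteq> {}}. {f \<in> rooted_forests A R. {a\<in>A. f a \<in> R} = S})"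
proof -
  have "\<exists>b\<in>A. f b \<in> R" if f: "f \<in> rooted_forests A R" for f
  proof -
    have "x \<in> A \<Longrightarrow> \<exists>b\<in>A. f b \<in> R" if "reaches f R x" for x
      using that
    proof (induction rule: reaches.induct)
      case (reaches_step a)
      moreover have "f a \<in> A \<union> R" using rooted_forests_PiE[OF f] reaches_step.prems by (rule PiE_mem)
      ultimately show ?case by auto
    qed (use dis in auto)
    then show ?thesis using \<open>A \<noteq> {}\<close> rooted_forests_reaches[OF f] by blast
  qed
  then show ?thesis by fastforce
qed

lemma card_rooted_forests_recurrence:
  assumes finA: "finite A" and finR: "finite R" and dis: "A \<inter> R = {}" and "A \<noteq> {}"
  shows "card (rooted_forests A R)
    = (\<Sum>S | S \<subseteq> A \<and> S \<noteq> {}. card R ^ card S * card (rooted_forests (A - S) S))"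
proof -
  let ?F = "\<lambda>S. {f \<in> rooted_forests A R. {a\<in>A. f a \<in> R} = S}"
  have "card (rooted_forests A R) = card (\<Union>S \<in> {S. S \<subseteq> A \<and> S \<noteq> {}}. ?F S)"
    using rooted_forests_eq_UN_root_children[OF dis \<open>A \<noteq> {}\<close>] by (rule arg_cong)
  also have "\<dots> = (\<Sum>S | S \<subseteq> A \<and> S \<noteq> {}. card (?F S))"
    using finA finite_rooted_forests[OF finA finR] by (intro card_UN_disjoint) auto
  also have "\<dots> = (\<Sum>S | S \<subseteq> A \<and> S \<noteq> {}. card R ^ card S * card (rooted_forests (A - S) S))"
    using card_rooted_forests_with_root_children[OF finA dis] by (intro sum.cong) auto
  finally show ?thesis .
qed

theorem card_rooted_forests:
  assumes "finite A" and "finite R" and "A \<inter> R = {}" and "A \<noteq> {}"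
  shows "card (rooted_forests A R) = card R * (card A + card R) ^ (card A - 1)"
  using assms
proof (induction "card A" arbitrary: A R rule: less_induct)
  case less
  note finA = less.prems(1)
  define m where "m = card A"
  define k where "k = card R"
  have smaller: "card (rooted_forests (A - S) S) = (if card S = m then 1 else card S * m ^ (m - card S - 1))"
    if SA: "S \<subseteq> A" and "S \<noteq> {}" for S
  proof (cases "card S = m")
    case True
    then have "S = A" using card_subset_eq[OF finA SA] m_def by simp
    then show ?thesis using True by (simp add: rooted_forests_def)
  next
    case False
    have finS: "finite S" using finA SA by (rule finite_subset[rotated])
    have "A - S \<noteq> {}" using False SA m_def by auto
    moreover have "card (A - S) = m - card S" "card S \<le> m"
      using SA finA m_def by (simp_all add: card_Diff_subset finS card_mono)
    moreover have "card (A - S) < card A"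
      using finA SA \<open>S \<noteq> {}\<close> by (intro psubset_card_mono) auto
    moreover have "(A - S) \<inter> S = {}" by blast
    ultimately show ?thesis
      using less.hyps[of "A - S" S] finA finS False by simp
  qed
  have "card (rooted_forests A R)
      = (\<Sum>S | S \<subseteq> A \<and> S \<noteq> {}. k ^ card S * card (rooted_forests (A - S) S))"
    unfolding k_def by (rule card_rooted_forests_recurrence[OF less.prems])
  also have "\<dots> = (\<Sum>S | S \<subseteq> A \<and> S \<noteq> {}.
      k ^ card S * (if card S = m then 1 else card S * m ^ (m - card S - 1)))"
    using smaller by (intro sum.cong) auto
  also have "\<dots> = (\<Sum>j=1..m. (m choose j) * (k ^ j * (if j = m then 1 else j * m ^ (m - j - 1))))"
    unfolding m_def
    by (rule sum_nonempty_subsets_by_card[OF finA, where g="\<lambda>j. k ^ j * (if j = card A then 1 else j * card A ^ (card A - j - 1))"])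
  also have "\<dots> = k * (m + k) ^ (m - 1)"
    using less.prems unfolding m_def by (intro sum_forest_count_identity) (simp add: card_gt_0_iff)
  finally show ?case unfolding m_def k_def .
qed

section \<open>Forest edges and connectivity\<close>

definition forest_edges :: "('a \<Rightarrow> 'a) \<Rightarrow> 'a set \<Rightarrow> 'a set set" where
  "forest_edges p A = (\<lambda>v. {v, p v}) ` A"

lemma walk_singleton [simp]: "walk E [x]"
  unfolding walk_def by simp

lemma walk_Cons_Cons [simp]: "walk E (x # y # xs) \<longleftrightarrow> {x, y} \<in> E \<and> walk E (y # xs)"
  unfolding walk_def by (auto simp: less_Suc_eq_0_disj All_less_Suc2)

lemma walk_nonempty: "walk E xs \<Longrightarrow> xs \<noteq> []"
  unfolding walk_def by simp

lemma walk_mono: "walk E xs \<Longrightarrow> E \<subseteq> F \<Longrightarrow> walk F xs"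
  unfolding walk_def by blast

lemma walk_append: "walk E xs \<Longrightarrow> walk E ys \<Longrightarrow> last xs = hd ys \<Longrightarrow> walk E (xs @ tl ys)"
proof (induction xs rule: induct_list012)
  case 1
  then show ?case by (simp add: walk_def)
next
  case (2 x)
  then show ?case by (cases ys) (auto simp: walk_def)
next
  case (3 x y zs)
  then show ?case by simp
qed

lemma walk_rev: "walk E xs \<Longrightarrow> walk E (rev xs)"
proof (induction xs rule: induct_list012)
  case (3 x y zs)
  then have "walk E (rev (y # zs) @ tl [y, x])"
    by (intro walk_append) (simp_all add: insert_commute)
  then show ?case by simp
qed simp_all

lemma inj_on_forest_edge:
  assumes p: "p \<in> rooted_forests A R" and dis: "A \<inter> R = {}"
  shows "inj_on (\<lambda>v. {v, p v}) A"
proof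
  fix v w assume v: "v \<in> A" and w: "w \<in> A" and eq: "{v, p v} = {w, p w}"
  show "v = w"
  proof (rule ccontr)
    assume "v \<noteq> w"
    then have "v = p w" "w = p v" using eq by (auto simp: doubleton_eq_iff)
    moreover have "v \<notin> R" "w \<notin> R" using v w dis by auto
    ultimately show False using reaches_no_2cycle[OF rooted_forests_reaches[OF p v]] by auto
  qed
qed

lemma card_forest_edges:
  assumes "p \<in> rooted_forests A R" and "A \<inter> R = {}"
  shows "card (forest_edges p A) = card A"
  unfolding forest_edges_def using card_image[OF inj_on_forest_edge[OF assms]] .

lemma forest_edges_subset:
  assumes p: "p \<in> rooted_forests A R" and dis: "A \<inter> R = {}"
  shows "forest_edges p A \<subseteq> {e. e \<subseteq> A \<union> R \<and> card e = 2}"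
proof
  fix e assume "e \<in> forest_edges p A"
  then obtain v where v: "v \<in> A" and e: "e = {v, p v}" unfolding forest_edges_def by auto
  have "p v \<in> A \<union> R" using rooted_forests_PiE[OF p] v by (rule PiE_mem)
  moreover have "p v \<noteq> v"
    using reaches_not_fixed[OF rooted_forests_reaches[OF p v]] v dis by auto
  ultimately show "e \<in> {e. e \<subseteq> A \<union> R \<and> card e = 2}" using e v by auto
qed

text \<open>Induction towards the roots: if \<open>p\<close> and \<open>q\<close> agree at \<open>q a\<close>, the edge \<open>{a, q a}\<close>
  of \<open>q\<close> can only be the edge of \<open>p\<close> at \<open>a\<close>, because the edge of \<open>p\<close> at \<open>q a\<close> would
  close a 2-cycle.\<close>

lemma inj_on_forest_edges:
  assumes "A \<inter> R = {}"
  shows "inj_on (\<lambda>p. forest_edges p A) (rooted_forests A R)"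
proof
  fix p q assume p: "p \<in> rooted_forests A R" and q: "q \<in> rooted_forests A R"
    and eq: "forest_edges p A = forest_edges q A"
  have agree: "p x = q x" if "reaches q R x" "x \<in> A" for x
    using that
  proof (induction rule: reaches.induct)
    case (reaches_step a)
    have "{a, q a} \<in> forest_edges p A" using eq reaches_step.prems unfolding forest_edges_def by auto
    then obtain w where w: "w \<in> A" and ew: "{a, q a} = {w, p w}" unfolding forest_edges_def by auto
    show ?case
    proof (cases "w = a")
      case False
      then have qa: "q a = w" and pw: "p w = a" using ew by (auto simp: doubleton_eq_iff)
      then have "q (q a) = a" using reaches_step.IH w by simp
      moreover have "a \<notin> R" "q a \<notin> R" using reaches_step.prems qa w assms by auto
      ultimately show ?thesis
        using reaches_no_2cycle[OF rooted_forests_reaches[OF q reaches_step.prems]] by auto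
    qed (use ew in \<open>auto simp: doubleton_eq_iff\<close>)
  qed (use assms in auto)
  show "p = q"
  proof
    fix x
    show "p x = q x"
    proof (cases "x \<in> A")
      case True
      then show ?thesis using agree rooted_forests_reaches[OF q True] by blast
    next
      case False
      then show ?thesis using rooted_forests_PiE[OF p] rooted_forests_PiE[OF q] by (simp add: PiE_def extensional_def)
    qed
  qed
qed

lemma walk_to_root:
  assumes p: "p \<in> rooted_forests A R"
  shows "reaches p R x \<Longrightarrow> x \<in> A \<union> R \<Longrightarrow> \<exists>xs. walk (forest_edges p A) xs \<and> hd xs = x \<and> last xs \<in> R"
proof (induction rule: reaches.induct)
  case (reaches_root a)
  then show ?case by (intro exI[of _ "[a]"]) simp
next
  case (reaches_step a)
  show ?case
  proof (cases "a \<in> R")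
    case True
    then show ?thesis by (intro exI[of _ "[a]"]) simp
  next
    case False
    then have a: "a \<in> A" using reaches_step.prems by simp
    have "p a \<in> A \<union> R" using rooted_forests_PiE[OF p] a by (rule PiE_mem)
    then obtain xs where xs: "walk (forest_edges p A) xs" "hd xs = p a" "last xs \<in> R"
      using reaches_step.IH by blast
    then obtain ys where ys: "xs = p a # ys" using walk_nonempty by (cases xs) auto
    have "{a, p a} \<in> forest_edges p A" using a unfolding forest_edges_def by auto
    then have "walk (forest_edges p A) (a # xs)" using xs(1) ys by simp
    then show ?thesis using xs(3) ys by (intro exI[of _ "a # xs"]) simp
  qed
qed

lemma connected_graph_if_forest_edges_subset:
  assumes p: "p \<in> rooted_forests A {r}" and E: "forest_edges p A \<subseteq> E"
  shows "connected_graph (A \<union> {r}) E"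
  unfolding connected_graph_def
proof (intro conjI ballI)
  show "A \<union> {r} \<noteq> {}" by simp
  fix u v assume u: "u \<in> A \<union> {r}" and v: "v \<in> A \<union> {r}"
  have "reaches p {r} x" if "x \<in> A \<union> {r}" for x
    using that rooted_forests_reaches[OF p] reaches_root[of x "{r}"] by blast
  then obtain xs ys where
    xs: "walk (forest_edges p A) xs" "hd xs = u" "last xs = r" and
    ys: "walk (forest_edges p A) ys" "hd ys = v" "last ys = r"
    using walk_to_root[OF p] u v by (metis singletonD)
  have "walk (forest_edges p A) (xs @ tl (rev ys))"
    using xs ys walk_rev walk_nonempty by (intro walk_append) (auto simp: hd_rev)
  moreover have "hd (xs @ tl (rev ys)) = u" using xs(2) walk_nonempty[OF xs(1)] by simp
  moreover have "last (xs @ tl (rev ys)) = v"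
  proof -
    obtain z zs where z: "rev ys = z # zs" using walk_nonempty[OF ys(1)] by (cases "rev ys") auto
    have "z = r" using z ys(3) hd_rev[of ys] by simp
    moreover have "last (z # zs) = v" using z ys(2) last_rev[of ys] by simp
    ultimately show ?thesis using z xs(3) by (cases "zs = []") simp_all
  qed
  ultimately show "\<exists>zs. walk E zs \<and> hd zs = u \<and> last zs = v"
    using walk_mono E by blast
qed

section \<open>Double counting connected graphs\<close>

lemma C_subset_pairs: "G \<in> C h n \<Longrightarrow> G \<subseteq> {e. e \<subseteq> {1..n} \<and> card e = 2}"
  unfolding C_def simple_graph_def by blast

lemma finite_C_member: "G \<in> C h n \<Longrightarrow> finite G"
  by (rule finite_subset[OF C_subset_pairs]) auto

lemma finite_C: "finite (C h n)"
proof (rule finite_subset)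
  show "C h n \<subseteq> Pow {e. e \<subseteq> {1..n} \<and> card e = 2}" using C_subset_pairs by blast
qed simp

lemma forest_plus_edges_in_C:
  assumes n: "1 \<le> n" and p: "p \<in> rooted_forests {2..n} {1}"
    and S: "S \<subseteq> {e. e \<subseteq> {1..n} \<and> card e = 2} - forest_edges p {2..n}" and "card S = h"
  shows "forest_edges p {2..n} \<union> S \<in> C h n"
proof -
  have V: "{2..n} \<union> {1} = {1..n}" using n by auto
  have dis: "{2..n} \<inter> {1::nat} = {}" by auto
  have T: "forest_edges p {2..n} \<subseteq> {e. e \<subseteq> {1..n} \<and> card e = 2}"
    using forest_edges_subset[OF p dis] V by simp
  have fin: "finite {e. e \<subseteq> {1..n::nat} \<and> card e = 2}" by simp
  have "card (forest_edges p {2..n} \<union> S) = (n - 1) + h"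
    using card_Un_disjoint[OF finite_subset[OF T fin] finite_subset[OF _ fin]] S
      card_forest_edges[OF p dis] \<open>card S = h\<close> by auto
  moreover have "simple_graph {1..n} (forest_edges p {2..n} \<union> S)"
    using T S unfolding simple_graph_def by blast
  moreover have "connected_graph {1..n} (forest_edges p {2..n} \<union> S)"
    using connected_graph_if_forest_edges_subset[OF p] V by simp
  ultimately show ?thesis using n unfolding C_def by simp
qed

lemma card_trees_with_extra_edges:
  fixes n h :: nat
  assumes n: "2 \<le> n"
  defines "U \<equiv> {e. e \<subseteq> {1..n} \<and> card e = 2}"
  shows "card (SIGMA p : rooted_forests {2..n} {1}. {S. S \<subseteq> U - forest_edges p {2..n} \<and> card S = h})
    = n ^ (n - 2) * (((n choose 2) - (n - 1)) choose h)"
proof -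
  define A where "A = {2..n}"
  have finA: "finite A" and "A \<noteq> {}" and dis: "A \<inter> {1} = {}" and V: "A \<union> {1} = {1..n}"
    and cA: "card A = n - 1"
    using n unfolding A_def by auto
  have finU: "finite U" and cU: "card U = n choose 2"
    unfolding U_def using n_subsets[of "{1..n}" 2] by simp_all
  have fiber: "card {S. S \<subseteq> U - forest_edges p A \<and> card S = h} = ((n choose 2) - (n - 1)) choose h"
    if p: "p \<in> rooted_forests A {1}" for p
  proof -
    have "forest_edges p A \<subseteq> U" using forest_edges_subset[OF p dis] V unfolding U_def by simp
    then have "card (U - forest_edges p A) = (n choose 2) - (n - 1)"
      using card_Diff_subset[OF finite_subset[OF _ finU]] card_forest_edges[OF p dis] cA cU by simp
    then show ?thesis using n_subsets[of "U - forest_edges p A" h] finU by simp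
  qed
  have "card (rooted_forests A {1}) = n ^ (n - 2)"
    using card_rooted_forests[OF finA _ dis \<open>A \<noteq> {}\<close>] cA n by (simp add: numeral_2_eq_2)
  then show ?thesis
    using finite_rooted_forests[OF finA] finU fiber unfolding A_def[symmetric] by simp
qed

lemma card_C_with_edge_subsets_le:
  assumes "1 \<le> n"
  shows "card (SIGMA G : C h n. {S. S \<subseteq> G \<and> card S = h}) \<le> card (C h n) * ((n - 1 + h) choose h)"
proof -
  have "card (SIGMA G : C h n. {S. S \<subseteq> G \<and> card S = h}) = (\<Sum>G \<in> C h n. card G choose h)"
    using finite_C finite_C_member by (simp add: n_subsets)
  also have "\<dots> \<le> (\<Sum>G \<in> C h n. (n - 1 + h) choose h)"
    using assms by (intro sum_mono binomial_right_mono) (auto simp: C_def)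
  finally show ?thesis by simp
qed

lemma card_C_times_binomial_ge:
  fixes n h :: nat
  assumes n: "2 \<le> n"
  shows "n ^ (n - 2) * (((n choose 2) - (n - 1)) choose h) \<le> card (C h n) * ((n - 1 + h) choose h)"
proof -
  define U where "U = {e. e \<subseteq> {1..n} \<and> card e = 2}"
  define X where "X = (SIGMA p : rooted_forests {2..n} {1}. {S. S \<subseteq> U - forest_edges p {2..n} \<and> card S = h})"
  define Y where "Y = (SIGMA G : C h n. {S. S \<subseteq> G \<and> card S = h})"
  have inj: "inj_on (\<lambda>(p, S). (forest_edges p {2..n} \<union> S, S)) X"
  proof (rule inj_onI, clarsimp)
    fix p p' S assume "(p, S) \<in> X" "(p', S) \<in> X" "forest_edges p {2..n} \<union> S = forest_edges p' {2..n} \<union> S"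
    then have "forest_edges p {2..n} = forest_edges p' {2..n}"
      and "p \<in> rooted_forests {2..n} {1}" "p' \<in> rooted_forests {2..n} {1}"
      unfolding X_def by blast+
    then show "p = p'" using inj_on_forest_edges[of "{2..n}" "{1}"] by (auto dest: inj_onD)
  qed
  have img: "(\<lambda>(p, S). (forest_edges p {2..n} \<union> S, S)) ` X \<subseteq> Y"
    using forest_plus_edges_in_C[of n] n unfolding X_def Y_def U_def by auto
  have "finite Y"
    unfolding Y_def using finite_C finite_C_member by auto
  then have "card X \<le> card Y" by (rule card_inj_on_le[OF inj img])
  then show ?thesis
    using card_trees_with_extra_edges[OF n, of h] card_C_with_edge_subsets_le[of n h] n
    unfolding X_def Y_def U_def by simp
qed

section \<open>Estimating the binomial ratio\<close>

lemma binomial_ge_power_times_binomial: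
  fixes q :: real and h M N :: nat
  assumes q: "1 \<le> q" and qNM: "q * real N \<le> real M"
  shows "q ^ h * real (N choose h) \<le> real (M choose h)"
proof (cases "h \<le> N")
  case True
  have "q ^ h * real (N choose h) = (\<Prod>i = 0..<h. q) * (\<Prod>i = 0..<h. (real N - real i) / real (h - i))"
    by (simp add: binomial_gbinomial gbinomial_altdef_of_nat)
  also have "\<dots> = (\<Prod>i = 0..<h. q * ((real N - real i) / real (h - i)))"
    by (rule prod.distrib[symmetric])
  also have "\<dots> \<le> (\<Prod>i = 0..<h. (real M - real i) / real (h - i))"
  proof (rule prod_mono)
    fix i assume i: "i \<in> {0..<h}"
    have "q * (real N - real i) \<le> real M - real i"
      using qNM mult_right_mono[OF q, of "real i"] by (simp add: right_diff_distrib)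
    moreover have "0 \<le> q * (real N - real i)" using q i True by simp
    ultimately show "0 \<le> q * ((real N - real i) / real (h - i)) \<and>
        q * ((real N - real i) / real (h - i)) \<le> (real M - real i) / real (h - i)"
      by (simp add: times_divide_eq_right divide_right_mono)
  qed
  also have "\<dots> = real (M choose h)"
    by (simp add: binomial_gbinomial gbinomial_altdef_of_nat)
  finally show ?thesis .
qed (simp add: binomial_eq_0)

lemma choose_two_minus_eq: "(n choose 2) - (n - 1) = (n - 1) choose 2"
  by (cases n) (simp_all add: numeral_2_eq_2)

lemma of_nat_choose_two: "real (n choose 2) = real n * (real n - 1) / 2"
proof -
  have "even (n * (n - 1))" by auto
  then have "2 * (n choose 2) = n * (n - 1)"
    unfolding choose_two by simp
  then show ?thesis by (cases n) (simp_all add: field_simps flip: of_nat_mult)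
qed

lemma excess_edge_ratio_bounds:
  fixes n h :: nat
  assumes n: "5 \<le> n" and h: "real h \<le> real n ^ 2 / 2 - 5 * real n / 2"
  defines "q \<equiv> (real n ^ 2 - 3 * real n) / (2 * (real n + real h))"
  shows "1 \<le> q" and "q * real (n - 1 + h) \<le> real ((n choose 2) - (n - 1))"
proof -
  have pos: "0 < real n + real h" using n by simp
  show "1 \<le> q" unfolding q_def using h pos by (simp add: field_simps)
  have "q * real (n - 1 + h) = (real n ^ 2 - 3 * real n) / 2 * ((real n + real h - 1) / (real n + real h))"
    unfolding q_def using n by (simp add: field_simps)
  also have "\<dots> \<le> (real n ^ 2 - 3 * real n) / 2"
  proof (rule mult_left_le)
    show "0 \<le> (real n ^ 2 - 3 * real n) / 2"
      using n by (simp add: power2_eq_square mult_right_mono)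
  qed (use pos in simp_all)
  also have "\<dots> \<le> real ((n choose 2) - (n - 1))"
    using n unfolding choose_two_minus_eq of_nat_choose_two by (simp add: power2_eq_square field_simps)
  finally show "q * real (n - 1 + h) \<le> real ((n choose 2) - (n - 1))" .
qed

theorem lemma4:
  fixes n h :: nat
  assumes "n \<ge> 1"
    and "real h \<le> (real n)^2 / 2 - 5 * real n / 2"
  shows "real (card (C h n)) \<ge>
           real n ^ (n - 2) * ((real n ^ 2 - 3 * real n) / (2 * (real n + real h))) ^ h"
proof -
  have n: "n \<ge> 5"
  proof (rule ccontr)
    assume "\<not> 5 \<le> n"
    then have "n \<in> {1, 2, 3, 4}" using assms(1) by auto
    then show False using assms(2) by (auto simp: power2_eq_square)
  qed
  define q where "q = (real n ^ 2 - 3 * real n) / (2 * (real n + real h))"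
  define B where "B = real ((n - 1 + h) choose h)"
  have "B > 0" unfolding B_def by simp
  have "q ^ h * B \<le> real (((n choose 2) - (n - 1)) choose h)"
    unfolding q_def B_def
    by (rule binomial_ge_power_times_binomial[OF excess_edge_ratio_bounds[OF n assms(2)]])
  then have "real n ^ (n - 2) * q ^ h * B \<le> real n ^ (n - 2) * real (((n choose 2) - (n - 1)) choose h)"
    by (simp add: mult.assoc mult_left_mono)
  also have "\<dots> \<le> real (card (C h n)) * B"
  proof -
    have "real (n ^ (n - 2) * (((n choose 2) - (n - 1)) choose h))
        \<le> real (card (C h n) * ((n - 1 + h) choose h))"
      using card_C_times_binomial_ge[of n h] n by (simp only: of_nat_le_iff)
    then show ?thesis unfolding B_def by simp
  qed
  finally have "real n ^ (n - 2) * q ^ h \<le> real (card (C h n))"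
    using \<open>B > 0\<close> by (rule mult_right_le_imp_le)
  then show ?thesis unfolding q_def .
qed

end
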